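(* There is a constant $C>0$, independent of the mesh, such that every solution $u_h\in V_h$ of the scheme satisfies $\|u_h\|_{L^\infty(\overline\Omega)}\le C$. Furthermore, let $p\in\mathbb R^d$, let $M\ge \|f\|_{L^\infty(\Omega)}\max_{B\in\mathbb S_1}\sqrt[d]{\det B}=\|f\|_{L^\infty(\Omega)}/d$, and let $\zeta(x)=\frac M2|x-p|^2$. Then, for every mesh, $u_h-I_h\zeta$ attains its minimum over $\overline\Omega$ at a boundary node and $u_h+I_h\zeta$ attains its maximum over $\overline\Omega$ at a boundary node.
   Context: Standing setting: $d\ge2$, $\Omega\subset\mathbb R^d$ a bounded open strictly convex domain, $f:\Omega\to[0,\infty)$ bounded and continuous, $g:\partial\Omega\to\mathbb R$ bounded and continuous. $\mathbb S$: real symmetric $d\times d$ matrices; $\mathbb S_+$: positive semidefinite ones; $\mathbb S_1=\{B\in\mathbb S_+:\operatorname{tr}B=1\}$; $|\cdot|$ is the Euclidean norm. Mesh: $\mathcal T_h$ is a shape-regular simplicial partition whose union $\Omega_h$ satisfies $\Omega_h\subset\Omega$; its nodes are $\mathcal N_h=\mathcal N_h^I\cup\mathcal N_h^B$, where the boundary nodes $\mathcal N_h^B$ (nodes on $\partial\Omega_h$) lie on $\partial\Omega$ and $\mathcal N_h^I$ are the interior nodes. $V_h$ is the space of continuous piecewise linear functions on $\mathcal T_h$ and $I_h$ the nodal interpolant onto $V_h$; functions on $\Omega_h$ (in particular elements of $V_h$) are extended to $\overline\Omega$ by being constant along the outer normal directions of $\partial\Omega_h$. $B(\overline\Omega)$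 denotes the bounded real functions on $\overline\Omega$. Controls: $\mathbf F\subset\mathbb R^{d\times d}\times\{\text{diagonal }d\times d\text{ matrices}\}$ is compact, the map $(\sigma,\lambda)\mapsto\sigma\lambda\sigma^T$ is a bijection from $\mathbf F$ onto $\mathbb S_1$, and every $\lambda$ occurring in $\mathbf F$ has nonnegative diagonal entries and the same trace $C>0$. For $B\in\mathbb S_1$, $(\sigma(B),\lambda(B))$ denotes its preimage; $\sigma_j$ is the $j$th column of $\sigma$ and $\lambda_j$ the $j$th diagonal entry of $\lambda$. Stencil size: $k=k(h,x)>0$ is such that $x\pm k(h,x)\sigma_j\in\overline\Omega_h$ for every $x\in\Omega_h$ and every column $\sigma_j$ of every $\sigma$ with $(\sigma,\lambda)\in\mathbf F$. Scheme: for $B\in\mathbb S_1$, $s\in\mathbb R$, $\phi\in B(\overline\Omega)$, with $(\sigma,\lambda)=(\sigma(B),\lambda(B))$ and $k=k(h,x_i)$, set $L_h^B(s,\phi)(x_i)=-\sum_{j=1}^d\lambda_j\frac{\phi(x_i-k\sigma_j)-2s+\phi(x_i+k\sigma_j)}{k^2}+f(x_i)\sqrt[d]{\det B}$ for $x_i\in\mathcal N_h^I$, and $L_h^B(s,\phi)(x_i)=s-g(x_i)$ for $x_i\in\mathcal N_h^B$; $H_h(s,\phi)(x_i)=\sup_{B\in\mathbb S_1}L_h^B(s,\phi)(x_i)$. The discrete solution $u_h\in V_h$ is the (unique) function with $H_h(u_h(x_i),u_h)(x_i)=0$ for all $x_i\in\mathcal N_h$. *)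

theory Defs
  imports "HOL-Analysis.Analysis"
begin

definition strictly_convex_domain :: "(real^'n) set \<Rightarrow> bool" where
  "strictly_convex_domain \<Omega> \<longleftrightarrow> convex \<Omega> \<and>
     (\<forall>x\<in>closure \<Omega>. \<forall>y\<in>closure \<Omega>. x \<noteq> y \<longrightarrow> open_segment x y \<subseteq> \<Omega>)"

definition symmetric_matrix :: "real^'n^'n \<Rightarrow> bool" where
  "symmetric_matrix B \<longleftrightarrow> transpose B = B"

definition psd_matrix :: "real^'n^'n \<Rightarrow> bool" where
  "psd_matrix B \<longleftrightarrow> symmetric_matrix B \<and> (\<forall>x. 0 \<le> x \<bullet> (B *v x))"

definition S1 :: "(real^'n^'n) set" where
  "S1 = {B. psd_matrix B \<and> trace B = 1}"

definition diagonal_matrix :: "real^'n^'n \<Rightarrow> bool" where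
  "diagonal_matrix L \<longleftrightarrow> (\<forall>i j. i \<noteq> j \<longrightarrow> L $ i $ j = 0)"

definition ctrl_map :: "(real^'n^'n) \<times> (real^'n^'n) \<Rightarrow> real^'n^'n" where
  "ctrl_map = (\<lambda>(s, l). s ** l ** transpose s)"

definition admissible_controls :: "((real^'n^'n) \<times> (real^'n^'n)) set \<Rightarrow> real \<Rightarrow> bool" where
  "admissible_controls F c \<longleftrightarrow> compact F \<and> 0 < c \<and>
     bij_betw ctrl_map F S1 \<and>
     (\<forall>(s, l)\<in>F. diagonal_matrix l \<and> (\<forall>i. 0 \<le> l $ i $ i) \<and> trace l = c)"

definition ctrl_of :: "((real^'n^'n) \<times> (real^'n^'n)) set \<Rightarrow> real^'n^'n \<Rightarrow> (real^'n^'n) \<times> (real^'n^'n)" where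
  "ctrl_of F B = the_inv_into F ctrl_map B"

text \<open>A mesh is a finite set of simplices, each given by its set of vertices.\<close>
type_synonym ('n) mesh = "(real^'n) set set"

definition mesh_union :: "('n::finite) mesh \<Rightarrow> (real^'n) set" where
  "mesh_union T = (\<Union>S\<in>T. convex hull S)"

definition Omega_h :: "('n::finite) mesh \<Rightarrow> (real^'n) set" where
  "Omega_h T = interior (mesh_union T)"

definition nodes :: "('n::finite) mesh \<Rightarrow> (real^'n) set" where
  "nodes T = \<Union>T"

definition bnodes :: "('n::finite) mesh \<Rightarrow> (real^'n) set" where
  "bnodes T = nodes T \<inter> frontier (Omega_h T)"

definition inodes :: "('n::finite) mesh \<Rightarrow> (real^'n) set" where
  "inodes T = nodes T - bnodes T"

definition simplicial_mesh :: "('n::finite) mesh \<Rightarrow> bool" where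
  "simplicial_mesh T \<longleftrightarrow> finite T \<and> T \<noteq> {} \<and>
     (\<forall>S\<in>T. finite S \<and> card S = CARD('n) + 1 \<and> \<not> affine_dependent S) \<and>
     (\<forall>S\<in>T. \<forall>S'\<in>T. convex hull S \<inter> convex hull S' = convex hull (S \<inter> S'))"

definition inradius :: "(real^'n) set \<Rightarrow> real" where
  "inradius K = Sup {r. 0 \<le> r \<and> (\<exists>c. ball c r \<subseteq> K)}"

definition shape_regular :: "real \<Rightarrow> ('n::finite) mesh \<Rightarrow> bool" where
  "shape_regular \<kappa> T \<longleftrightarrow> (\<forall>S\<in>T. diameter (convex hull S) \<le> \<kappa> * inradius (convex hull S))"

definition Vh :: "('n::finite) mesh \<Rightarrow> (real^'n \<Rightarrow> real) set" where
  "Vh T = {v. continuous_on (mesh_union T) v \<and>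
     (\<forall>S\<in>T. \<exists>a b. \<forall>x\<in>convex hull S. v x = a \<bullet> x + b) \<and>
     (\<forall>x. x \<notin> mesh_union T \<longrightarrow> v x = 0)}"

definition Ih :: "('n::finite) mesh \<Rightarrow> (real^'n \<Rightarrow> real) \<Rightarrow> (real^'n \<Rightarrow> real)" where
  "Ih T \<phi> = (THE v. v \<in> Vh T \<and> (\<forall>x\<in>nodes T. v x = \<phi> x))"

text \<open>Extension of a function on \<open>closure \<Omega>\<^sub>h\<close> to the whole space, constant along
  outer normal directions: the value at a point outside is the value at a nearest
  point of \<open>closure \<Omega>\<^sub>h\<close>.\<close>
definition ext :: "('n::finite) mesh \<Rightarrow> (real^'n \<Rightarrow> real) \<Rightarrow> (real^'n \<Rightarrow> real)" where
  "ext T v x = (if x \<in> mesh_union T then v x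
     else v (SOME y. y \<in> mesh_union T \<and> dist x y = infdist x (mesh_union T)))"

definition Lh :: "((real^'n^'n) \<times> (real^'n^'n)) set \<Rightarrow> (real^'n \<Rightarrow> real) \<Rightarrow> (real^'n \<Rightarrow> real)
    \<Rightarrow> ('n::finite) mesh \<Rightarrow> (real^'n \<Rightarrow> real) \<Rightarrow> real^'n^'n \<Rightarrow> real \<Rightarrow> (real^'n \<Rightarrow> real) \<Rightarrow> real^'n \<Rightarrow> real" where
  "Lh F f g T k B s \<phi> x =
     (if x \<in> inodes T then
        (let (sg, lm) = ctrl_of F B; kk = k x in
          - (\<Sum>j\<in>UNIV. lm $ j $ j *
               (\<phi> (x - kk *\<^sub>R column j sg) - 2 * s + \<phi> (x + kk *\<^sub>R column j sg)) / kk\<^sup>2)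
          + f x * root CARD('n) (det B))
      else s - g x)"

definition Hh :: "((real^'n^'n) \<times> (real^'n^'n)) set \<Rightarrow> (real^'n \<Rightarrow> real) \<Rightarrow> (real^'n \<Rightarrow> real)
    \<Rightarrow> ('n::finite) mesh \<Rightarrow> (real^'n \<Rightarrow> real) \<Rightarrow> real \<Rightarrow> (real^'n \<Rightarrow> real) \<Rightarrow> real^'n \<Rightarrow> real" where
  "Hh F f g T k s \<phi> x = (SUP B\<in>S1. Lh F f g T k B s \<phi> x)"

definition admissible_k :: "((real^'n^'n) \<times> (real^'n^'n)) set \<Rightarrow> ('n::finite) mesh \<Rightarrow> (real^'n \<Rightarrow> real) \<Rightarrow> bool" where
  "admissible_k F T k \<longleftrightarrow> (\<forall>x\<in>Omega_h T. 0 < k x \<and>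
     (\<forall>(sg, lm)\<in>F. \<forall>j. x + k x *\<^sub>R column j sg \<in> closure (Omega_h T) \<and>
                         x - k x *\<^sub>R column j sg \<in> closure (Omega_h T)))"

definition admissible_mesh :: "(real^'n) set \<Rightarrow> real \<Rightarrow> ('n::finite) mesh \<Rightarrow> bool" where
  "admissible_mesh \<Omega> \<kappa> T \<longleftrightarrow> simplicial_mesh T \<and> shape_regular \<kappa> T \<and>
     Omega_h T \<subseteq> \<Omega> \<and> bnodes T \<subseteq> frontier \<Omega>"

definition discrete_solution :: "((real^'n^'n) \<times> (real^'n^'n)) set \<Rightarrow> (real^'n \<Rightarrow> real) \<Rightarrow> (real^'n \<Rightarrow> real)
    \<Rightarrow> ('n::finite) mesh \<Rightarrow> (real^'n \<Rightarrow> real) \<Rightarrow> (real^'n \<Rightarrow> real) \<Rightarrow> bool" where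
  "discrete_solution F f g T k u \<longleftrightarrow> u \<in> Vh T \<and>
     (\<forall>x\<in>nodes T. Hh F f g T k (u x) (ext T u) x = 0)"

end

theory Submission
  imports Defs
begin

text \<open>
  At an interior node the supremum over the compact control set is attained, so some control \<open>B\<close>
  is active: its unscaled second difference \<open>\<Delta>\<^sub>B u\<^sub>h\<close> equals \<open>k\<^sup>2 f det(B)\<^bsup>1/d\<^esup> \<in> [0, M k\<^sup>2]\<close>.
  On the other hand \<open>\<Delta>\<^sub>B(I\<^sub>h\<zeta>) \<ge> \<Delta>\<^sub>B \<zeta> = M k\<^sup>2\<close>, because the interpolant of the convex
  \<open>\<zeta>\<close> lies above \<open>\<zeta>\<close> and agrees with it at the nodes. Hence neither \<open>u\<^sub>h - I\<^sub>h\<zeta>\<close>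
  nor \<open>-(u\<^sub>h + I\<^sub>h\<zeta>)\<close> has a positive second difference there.

  A piecewise linear function attains its minimum at a node, and a minimizing node of largest
  norm is not the midpoint of two distinct minimizers; at such a node every second difference
  along a nondegenerate direction is positive. So both minima sit at boundary nodes, where
  \<open>u\<^sub>h = g\<close>. Taking \<open>p = 0\<close> and \<open>M = \<parallel>f\<parallel>\<^sub>\<infinity> / d\<close> then bounds \<open>u\<^sub>h\<close> by
  \<open>sup |g| + M/2 \<cdot> sup\<^sub>\<Omega> |x|\<^sup>2\<close> independently of the mesh.
\<close>

section \<open>Meshes and the extension operator\<close>

lemma convex_hull_subset_mesh_union: "S \<in> T \<Longrightarrow> convex hull S \<subseteq> mesh_union T"
  by (auto simp: mesh_union_def)

lemma nodes_subset_mesh_union: "nodes T \<subseteq> mesh_union T"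
  by (auto simp: nodes_def mesh_union_def dest: hull_subset[THEN subsetD])

lemma bnodes_subset_nodes: "bnodes T \<subseteq> nodes T"
  by (auto simp: bnodes_def)

lemma finite_nodes: "simplicial_mesh T \<Longrightarrow> finite (nodes T)"
  by (auto simp: simplicial_mesh_def nodes_def)

lemma nodes_nonempty:
  assumes "simplicial_mesh T"
  shows "nodes T \<noteq> {}"
proof -
  obtain S where "S \<in> T" using assms by (auto simp: simplicial_mesh_def)
  moreover have "S \<noteq> {}" using assms \<open>S \<in> T\<close> by (auto simp: simplicial_mesh_def)
  ultimately show ?thesis by (auto simp: nodes_def)
qed

lemma compact_mesh_union: "simplicial_mesh T \<Longrightarrow> compact (mesh_union T)"
  unfolding mesh_union_def simplicial_mesh_def
  by (intro compact_UN) (auto intro: compact_convex_hull[OF finite_imp_compact])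

lemma mesh_point_convex_comb:
  assumes "simplicial_mesh T" "x \<in> mesh_union T"
  obtains S \<mu> where "S \<in> T" "S \<subseteq> nodes T" "finite S" "\<forall>s\<in>S. 0 \<le> \<mu> s" "sum \<mu> S = 1"
    "x = (\<Sum>s\<in>S. \<mu> s *\<^sub>R s)"
proof -
  obtain S where "S \<in> T" "x \<in> convex hull S" using assms(2) by (auto simp: mesh_union_def)
  moreover have "finite S" using assms(1) \<open>S \<in> T\<close> by (auto simp: simplicial_mesh_def)
  moreover have "S \<subseteq> nodes T" using \<open>S \<in> T\<close> by (auto simp: nodes_def)
  ultimately show ?thesis using that by (auto simp: convex_hull_finite)
qed

lemma mesh_union_subset_closure_Omega_h:
  fixes T :: "('n::finite) mesh"
  assumes "simplicial_mesh T"
  shows "mesh_union T \<subseteq> closure (Omega_h T)"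
proof
  fix x assume "x \<in> mesh_union T"
  then obtain S where S: "S \<in> T" "x \<in> convex hull S" by (auto simp: mesh_union_def)
  have S_simplex: "finite S" "card S = Suc DIM(real^'n)" "\<not> affine_dependent S"
    using assms S by (auto simp: simplicial_mesh_def)
  then have "interior (convex hull S) \<noteq> {}"
    using interior_convex_hull_eq_empty[OF S_simplex(2)] by simp
  then have "closure (interior (convex hull S)) = convex hull S"
    using convex_closure_interior[OF convex_convex_hull \<open>interior (convex hull S) \<noteq> {}\<close>] S_simplex(1)
    by (simp add: closure_closed compact_imp_closed compact_convex_hull finite_imp_compact)
  moreover have "interior (convex hull S) \<subseteq> Omega_h T"
    unfolding Omega_h_def by (intro interior_mono convex_hull_subset_mesh_union S)
  ultimately show "x \<in> closure (Omega_h T)"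
    using S(2) closure_mono by blast
qed

lemma closure_Omega_h_subset_mesh_union:
  "simplicial_mesh T \<Longrightarrow> closure (Omega_h T) \<subseteq> mesh_union T"
  unfolding Omega_h_def
  by (meson closure_minimal compact_imp_closed compact_mesh_union interior_subset order_trans)

lemma inode_in_Omega_h:
  assumes "simplicial_mesh T" "x \<in> inodes T"
  shows "x \<in> Omega_h T"
proof -
  have "x \<in> nodes T" "x \<notin> frontier (Omega_h T)"
    using assms(2) by (auto simp: inodes_def bnodes_def)
  moreover have "x \<in> closure (Omega_h T)"
    using \<open>x \<in> nodes T\<close> nodes_subset_mesh_union mesh_union_subset_closure_Omega_h[OF assms(1)]
    by blast
  ultimately show ?thesis by (simp add: frontier_def Omega_h_def)
qed

lemma ext_eq: "x \<in> mesh_union T \<Longrightarrow> ext T h x = h x"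
  by (simp add: ext_def)

lemma ext_diff: "ext T (\<lambda>y. h y - h' y) x = ext T h x - ext T h' x"
  by (simp add: ext_def)

lemma ext_add: "ext T (\<lambda>y. h y + h' y) x = ext T h x + ext T h' x"
  by (simp add: ext_def)

lemma ext_uminus: "ext T (\<lambda>y. - h y) x = - ext T h x"
  by (simp add: ext_def)

lemma ext_value_in_mesh_union:
  assumes "simplicial_mesh T"
  obtains y where "y \<in> mesh_union T" "ext T h x = h y"
proof (cases "x \<in> mesh_union T")
  case True
  then show ?thesis using that by (simp add: ext_def)
next
  case False
  have "closed (mesh_union T)" by (rule compact_imp_closed[OF compact_mesh_union[OF assms]])
  moreover have "mesh_union T \<noteq> {}"
    using nodes_nonempty[OF assms] nodes_subset_mesh_union by blast
  ultimately obtain y where "y \<in> mesh_union T" "infdist x (mesh_union T) = dist x y"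
    using infdist_attains_inf by blast
  then have nearest: "\<exists>y. y \<in> mesh_union T \<and> dist x y = infdist x (mesh_union T)" by auto
  let ?y = "SOME y. y \<in> mesh_union T \<and> dist x y = infdist x (mesh_union T)"
  have "?y \<in> mesh_union T" using someI_ex[OF nearest] by blast
  moreover have "ext T h x = h ?y" using False by (simp add: ext_def)
  ultimately show ?thesis using that by blast
qed

lemma ext_minimizer:
  assumes "simplicial_mesh T" "z \<in> mesh_union T" "\<forall>y\<in>mesh_union T. v z \<le> v y"
  shows "ext T v z \<le> ext T v x"
proof -
  obtain y where "y \<in> mesh_union T" "ext T v x = v y"
    using ext_value_in_mesh_union[OF assms(1)] .
  then show ?thesis using assms(2,3) by (simp add: ext_eq)
qed

section \<open>Piecewise linear functions and the nodal interpolant\<close>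

lemma Vh_convex_comb:
  assumes "v \<in> Vh T" "S \<in> T" "finite S" "\<forall>s\<in>S. 0 \<le> \<mu> s" "sum \<mu> S = 1"
  shows "v (\<Sum>s\<in>S. \<mu> s *\<^sub>R s) = (\<Sum>s\<in>S. \<mu> s * v s)"
proof -
  obtain a b where ab: "\<forall>x\<in>convex hull S. v x = a \<bullet> x + b"
    using assms(1,2) unfolding Vh_def by blast
  have "(\<Sum>s\<in>S. \<mu> s *\<^sub>R s) \<in> convex hull S"
    using assms(3-5) unfolding convex_hull_finite[OF assms(3)] by blast
  then have "v (\<Sum>s\<in>S. \<mu> s *\<^sub>R s) = (\<Sum>s\<in>S. \<mu> s * (a \<bullet> s)) + (\<Sum>s\<in>S. \<mu> s) * b"
    using ab assms(5) by (simp add: inner_sum_right)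
  also have "\<dots> = (\<Sum>s\<in>S. \<mu> s * (a \<bullet> s + b))"
    by (simp add: distrib_left sum.distrib sum_distrib_right)
  also have "\<dots> = (\<Sum>s\<in>S. \<mu> s * v s)"
    using ab hull_subset[of S convex] by (intro sum.cong) auto
  finally show ?thesis .
qed

lemma Vh_lincomb:
  assumes "u \<in> Vh T" "v \<in> Vh T"
  shows "(\<lambda>x. \<alpha> * u x + \<beta> * v x) \<in> Vh T"
proof -
  have "\<exists>a b. \<forall>x\<in>convex hull S. \<alpha> * u x + \<beta> * v x = a \<bullet> x + b" if "S \<in> T" for S
  proof -
    obtain a b a' b' where "\<forall>x\<in>convex hull S. u x = a \<bullet> x + b" "\<forall>x\<in>convex hull S. v x = a' \<bullet> x + b'"
      using assms \<open>S \<in> T\<close> unfolding Vh_def by blast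
    then have "\<forall>x\<in>convex hull S. \<alpha> * u x + \<beta> * v x = (\<alpha> *\<^sub>R a + \<beta> *\<^sub>R a') \<bullet> x + (\<alpha> * b + \<beta> * b')"
      by (simp add: inner_add_left algebra_simps)
    then show ?thesis by blast
  qed
  moreover have "continuous_on (mesh_union T) (\<lambda>x. \<alpha> * u x + \<beta> * v x)"
    using assms unfolding Vh_def by (auto intro!: continuous_intros)
  ultimately show ?thesis
    using assms unfolding Vh_def by simp
qed

lemma Vh_diff: "u \<in> Vh T \<Longrightarrow> v \<in> Vh T \<Longrightarrow> (\<lambda>x. u x - v x) \<in> Vh T"
  using Vh_lincomb[of u T v 1 "-1"] by simp

lemma Vh_add_uminus: "u \<in> Vh T \<Longrightarrow> v \<in> Vh T \<Longrightarrow> (\<lambda>x. - (u x + v x)) \<in> Vh T"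
  using Vh_lincomb[of u T v "-1" "-1"] by simp

lemma Vh_eq_on_nodes:
  assumes "simplicial_mesh T" "u \<in> Vh T" "v \<in> Vh T" "\<forall>x\<in>nodes T. u x = v x"
  shows "u = v"
proof
  fix x show "u x = v x"
  proof (cases "x \<in> mesh_union T")
    case True
    then obtain S \<mu> where S: "S \<in> T" "S \<subseteq> nodes T" "finite S" "\<forall>s\<in>S. 0 \<le> \<mu> s" "sum \<mu> S = 1"
      and x: "x = (\<Sum>s\<in>S. \<mu> s *\<^sub>R s)"
      using mesh_point_convex_comb[OF assms(1)] by blast
    have "u x = (\<Sum>s\<in>S. \<mu> s * u s)" using Vh_convex_comb[OF assms(2) S(1,3-5)] x by simp
    also have "\<dots> = (\<Sum>s\<in>S. \<mu> s * v s)" using S(2) assms(4) by (intro sum.cong) auto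
    also have "\<dots> = v x" using Vh_convex_comb[OF assms(3) S(1,3-5)] x by simp
    finally show ?thesis .
  next
    case False
    then show ?thesis using assms(2,3) by (simp add: Vh_def)
  qed
qed

lemma affine_comb_eq:
  assumes "sum \<mu> X = 1"
  shows "a \<bullet> (\<Sum>s\<in>X. \<mu> s *\<^sub>R s) + b = (\<Sum>s\<in>X. \<mu> s * (a \<bullet> s + b))"
proof -
  have "a \<bullet> (\<Sum>s\<in>X. \<mu> s *\<^sub>R s) + b = (\<Sum>s\<in>X. \<mu> s * (a \<bullet> s)) + (\<Sum>s\<in>X. \<mu> s) * b"
    using assms by (simp add: inner_sum_right)
  also have "\<dots> = (\<Sum>s\<in>X. \<mu> s * (a \<bullet> s + b))"
    by (simp add: distrib_left sum.distrib sum_distrib_right)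
  finally show ?thesis .
qed

lemma affine_interpolation:
  fixes S :: "(real^'n::finite) set"
  assumes "\<not> affine_dependent S"
  shows "\<exists>a b. \<forall>s\<in>S. a \<bullet> s + b = \<phi> s"
proof (cases "S = {}")
  case True then show ?thesis by auto
next
  case False
  then obtain s0 where s0: "s0 \<in> S" by auto
  define B where "B = (\<lambda>x. -s0 + x) ` (S - {s0})"
  have "\<not> dependent B"
    using affine_dependent_iff_dependent2[OF s0] assms by (simp add: B_def)
  from linear_independent_extend[OF this, of "\<lambda>y. \<phi> (s0 + y) - \<phi> s0"]
  obtain g where g: "linear g" "\<And>y. y \<in> B \<Longrightarrow> g y = \<phi> (s0 + y) - \<phi> s0"
    by blast
  define a where "a = (\<Sum>i\<in>Basis. g i *\<^sub>R i)"
  have ga: "g x = a \<bullet> x" for x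
  proof -
    have "g x = (\<Sum>i\<in>Basis. x \<bullet> i * (g i \<bullet> 1))"
      using Linear_Algebra.linear_componentwise[OF g(1), of x 1] by simp
    also have "\<dots> = a \<bullet> x"
      unfolding a_def inner_sum_left by (simp add: inner_commute mult.commute)
    finally show ?thesis .
  qed
  have "a \<bullet> s + (\<phi> s0 - a \<bullet> s0) = \<phi> s" if "s \<in> S" for s
  proof (cases "s = s0")
    case False
    then have "-s0 + s \<in> B" using that by (auto simp: B_def)
    then have "g (-s0 + s) = \<phi> s - \<phi> s0" using g(2) by simp
    then show ?thesis by (simp add: ga inner_diff_right)
  qed simp
  then show ?thesis by blast
qed

lemma Ih_exists:
  fixes T :: "('n::finite) mesh"
  assumes T: "simplicial_mesh T"
  shows "\<exists>v. v \<in> Vh T \<and> (\<forall>x\<in>nodes T. v x = \<phi> x)"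
proof -
  have "\<forall>S\<in>T. \<exists>ab. \<forall>s\<in>S. fst ab \<bullet> s + snd ab = \<phi> s"
    using affine_interpolation T unfolding simplicial_mesh_def by fastforce
  then obtain AB where AB_pair: "\<And>S s. S \<in> T \<Longrightarrow> s \<in> S \<Longrightarrow> fst (AB S) \<bullet> s + snd (AB S) = \<phi> s"
    by metis
  define A where "A S = fst (AB S)" for S
  define Bc where "Bc S = snd (AB S)" for S
  have AB: "A S \<bullet> s + Bc S = \<phi> s" if "S \<in> T" "s \<in> S" for S s
    using AB_pair[OF that] by (simp add: A_def Bc_def)
  \<comment> \<open>Conformity: two simplices meet in a common face, where both affine pieces interpolate \<open>\<phi>\<close>.\<close>
  have agree: "A S \<bullet> x + Bc S = A S' \<bullet> x + Bc S'"
    if S: "S \<in> T" "S' \<in> T" "x \<in> convex hull S" "x \<in> convex hull S'" for S S' x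
  proof -
    have fin: "finite (S \<inter> S')" using T S unfolding simplicial_mesh_def by blast
    have "x \<in> convex hull (S \<inter> S')" using T S unfolding simplicial_mesh_def by blast
    then obtain \<mu> where \<mu>: "sum \<mu> (S \<inter> S') = 1" "x = (\<Sum>s\<in>S \<inter> S'. \<mu> s *\<^sub>R s)"
      unfolding convex_hull_finite[OF fin] by blast
    have "A S \<bullet> x + Bc S = (\<Sum>s\<in>S \<inter> S'. \<mu> s * (A S \<bullet> s + Bc S))"
      using affine_comb_eq[OF \<mu>(1)] \<mu>(2) by simp
    also have "\<dots> = (\<Sum>s\<in>S \<inter> S'. \<mu> s * (A S' \<bullet> s + Bc S'))"
      using AB S by (intro sum.cong) auto
    also have "\<dots> = A S' \<bullet> x + Bc S'"
      using affine_comb_eq[OF \<mu>(1)] \<mu>(2) by simp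
    finally show ?thesis .
  qed
  define v where "v x = (if x \<in> mesh_union T
      then (let S = SOME S. S \<in> T \<and> x \<in> convex hull S in A S \<bullet> x + Bc S) else 0)" for x
  have v_piece: "v x = A S \<bullet> x + Bc S" if "S \<in> T" "x \<in> convex hull S" for S x
  proof -
    let ?S = "SOME S. S \<in> T \<and> x \<in> convex hull S"
    have "\<exists>S. S \<in> T \<and> x \<in> convex hull S" using that by blast
    from someI_ex[OF this] have "?S \<in> T" "x \<in> convex hull ?S" by blast+
    then show ?thesis
      using agree[of ?S S x] that convex_hull_subset_mesh_union by (auto simp: v_def Let_def)
  qed
  have "continuous_on (mesh_union T) v"
    unfolding mesh_union_def
  proof (rule continuous_on_closed_Union)
    show "finite T" using T by (simp add: simplicial_mesh_def)
    fix S assume "S \<in> T"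
    then show "closed (convex hull S)"
      using T by (simp add: simplicial_mesh_def compact_imp_closed compact_convex_hull finite_imp_compact)
    have "continuous_on (convex hull S) (\<lambda>x. A S \<bullet> x + Bc S)" by (intro continuous_intros)
    then show "continuous_on (convex hull S) v"
      by (rule continuous_on_eq) (use v_piece \<open>S \<in> T\<close> in auto)
  qed
  moreover have "\<forall>S\<in>T. \<exists>a b. \<forall>x\<in>convex hull S. v x = a \<bullet> x + b" using v_piece by blast
  moreover have "\<forall>x. x \<notin> mesh_union T \<longrightarrow> v x = 0" by (simp add: v_def)
  ultimately have "v \<in> Vh T" unfolding Vh_def by blast
  moreover have "v x = \<phi> x" if x_node: "x \<in> nodes T" for x
  proof -
    obtain S where "S \<in> T" "x \<in> S" using x_node by (auto simp: nodes_def)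
    then show ?thesis using v_piece AB hull_subset[of S convex] by (metis subsetD)
  qed
  ultimately show ?thesis by blast
qed

lemma
  assumes "simplicial_mesh T"
  shows Ih_in_Vh: "Ih T \<phi> \<in> Vh T" and Ih_node: "x \<in> nodes T \<Longrightarrow> Ih T \<phi> x = \<phi> x"
proof -
  have "\<exists>!v. v \<in> Vh T \<and> (\<forall>x\<in>nodes T. v x = \<phi> x)"
    using Ih_exists[OF assms, of \<phi>] Vh_eq_on_nodes[OF assms] by (metis (mono_tags))
  from theI'[OF this] show "Ih T \<phi> \<in> Vh T" "x \<in> nodes T \<Longrightarrow> Ih T \<phi> x = \<phi> x"
    unfolding Ih_def by blast+
qed

lemma Ih_ge_convex:
  assumes "simplicial_mesh T" "convex_on UNIV \<phi>" "x \<in> mesh_union T"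
  shows "\<phi> x \<le> Ih T \<phi> x"
proof -
  obtain S \<mu> where S: "S \<in> T" "S \<subseteq> nodes T" "finite S" "\<forall>s\<in>S. 0 \<le> \<mu> s" "sum \<mu> S = 1"
    and x: "x = (\<Sum>s\<in>S. \<mu> s *\<^sub>R s)"
    using mesh_point_convex_comb[OF assms(1,3)] by blast
  have "S \<noteq> {}" using S(5) by auto
  have "\<phi> x \<le> (\<Sum>s\<in>S. \<mu> s * \<phi> s)"
    unfolding x using convex_on_sum[OF S(3) \<open>S \<noteq> {}\<close> assms(2)] S(4,5) by simp
  also have "\<dots> = (\<Sum>s\<in>S. \<mu> s * Ih T \<phi> s)"
    using Ih_node[OF assms(1)] S(2) by (intro sum.cong) auto
  also have "\<dots> = Ih T \<phi> x"
    unfolding x by (rule Vh_convex_comb[OF Ih_in_Vh[OF assms(1)] S(1,3-5), symmetric])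
  finally show ?thesis .
qed

lemma convex_on_norm_diff_power2: "convex_on UNIV (\<lambda>x. (norm (x - p))\<^sup>2)"
proof (rule convex_onI)
  fix t :: real and x y assume t: "0 < t" "t < 1"
  have "(1 - t) *\<^sub>R x + t *\<^sub>R y - p = (1 - t) *\<^sub>R (x - p) + t *\<^sub>R (y - p)"
    by (simp add: algebra_simps)
  then have "norm ((1 - t) *\<^sub>R x + t *\<^sub>R y - p) \<le> (1 - t) * norm (x - p) + t * norm (y - p)"
    using norm_triangle_ineq[of "(1 - t) *\<^sub>R (x - p)" "t *\<^sub>R (y - p)"] t by simp
  then have "(norm ((1 - t) *\<^sub>R x + t *\<^sub>R y - p))\<^sup>2 \<le> ((1 - t) * norm (x - p) + t * norm (y - p))\<^sup>2"
    by (simp add: power_mono)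
  also have "\<dots> \<le> (1 - t) * (norm (x - p))\<^sup>2 + t * (norm (y - p))\<^sup>2"
    using convex_onD[OF convex_power2, of t "norm (x - p)" "norm (y - p)"] t by simp
  finally show "(norm ((1 - t) *\<^sub>R x + t *\<^sub>R y - p))\<^sup>2 \<le> (1 - t) * (norm (x - p))\<^sup>2 + t * (norm (y - p))\<^sup>2" .
qed simp

section \<open>Extreme minimizers\<close>

definition extreme_minimizer :: "('a::real_vector \<Rightarrow> real) \<Rightarrow> 'a set \<Rightarrow> 'a \<Rightarrow> bool" where
  "extreme_minimizer v X e \<longleftrightarrow> e \<in> X \<and> (\<forall>x\<in>X. v e \<le> v x) \<and>
     (\<forall>a\<in>X. \<forall>b\<in>X. v a = v e \<longrightarrow> v b = v e \<longrightarrow> e = midpoint a b \<longrightarrow> a = b)"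

lemma midpoint_eq_imp_eq_of_norm_le:
  fixes a b e :: "'a::real_inner"
  assumes "e = midpoint a b" "norm a \<le> norm e" "norm b \<le> norm e"
  shows "a = b"
proof -
  have "a + b = 2 *\<^sub>R e" using assms(1) by (simp add: midpoint_def)
  moreover have "(norm (a - b))\<^sup>2 = 2 * (norm a)\<^sup>2 + 2 * (norm b)\<^sup>2 - (norm (a + b))\<^sup>2"
    by (simp add: power2_norm_eq_inner inner_add_left inner_add_right inner_diff_left
        inner_diff_right inner_commute)
  ultimately have "(norm (a - b))\<^sup>2 = 2 * (norm a)\<^sup>2 + 2 * (norm b)\<^sup>2 - 4 * (norm e)\<^sup>2"
    by (simp add: power_mult_distrib)
  moreover have "(norm a)\<^sup>2 \<le> (norm e)\<^sup>2" "(norm b)\<^sup>2 \<le> (norm e)\<^sup>2"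
    using assms(2,3) by (simp_all add: power_mono)
  ultimately have "(norm (a - b))\<^sup>2 \<le> 0" by linarith
  then show ?thesis by simp
qed

lemma Vh_extreme_minimizer_at_node:
  fixes T :: "('n::finite) mesh"
  assumes T: "simplicial_mesh T" and v: "v \<in> Vh T"
  obtains e where "e \<in> nodes T" "extreme_minimizer v (mesh_union T) e"
proof -
  define m where "m = Min (v ` nodes T)"
  have m_le: "m \<le> v n" if "n \<in> nodes T" for n
    using finite_nodes[OF T] that by (simp add: m_def)
  define N where "N = {n\<in>nodes T. v n = m}"
  have "finite N" using finite_nodes[OF T] by (simp add: N_def)
  moreover have "m \<in> v ` nodes T"
    using Min_in finite_nodes[OF T] nodes_nonempty[OF T] by (simp add: m_def)
  then have "N \<noteq> {}" by (auto simp: N_def)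
  ultimately have "Max (norm ` N) \<in> norm ` N" by simp
  then obtain e where e: "e \<in> N" "norm e = Max (norm ` N)" by auto
  have e_max: "norm n \<le> norm e" if "n \<in> N" for n
    using \<open>finite N\<close> that by (simp add: e(2))
  have minimal: "m \<le> v x" and level: "v x = m \<Longrightarrow> norm x \<le> norm e"
    if x_mesh: "x \<in> mesh_union T" for x
  proof -
    obtain S \<mu> where S: "S \<in> T" "S \<subseteq> nodes T" "finite S" "\<forall>s\<in>S. 0 \<le> \<mu> s" "sum \<mu> S = 1"
      and x: "x = (\<Sum>s\<in>S. \<mu> s *\<^sub>R s)"
      using mesh_point_convex_comb[OF T x_mesh] by blast
    have excess: "v x - m = (\<Sum>s\<in>S. \<mu> s * (v s - m))"
      using Vh_convex_comb[OF v S(1,3-5)] S(5)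
      by (simp add: x right_diff_distrib sum_subtractf flip: sum_distrib_right)
    have excess_nonneg: "\<forall>s\<in>S. 0 \<le> \<mu> s * (v s - m)" using S(2,4) m_le by auto
    then have "0 \<le> (\<Sum>s\<in>S. \<mu> s * (v s - m))" by (simp add: sum_nonneg)
    then show "m \<le> v x" using excess by linarith
    assume "v x = m"
    then have no_excess: "\<forall>s\<in>S. \<mu> s * (v s - m) = 0"
      using excess excess_nonneg sum_nonneg_eq_0_iff[OF S(3), of "\<lambda>s. \<mu> s * (v s - m)"] by auto
    have "\<mu> s * norm s \<le> \<mu> s * norm e" if "s \<in> S" for s
    proof (cases "\<mu> s = 0")
      case False
      then have "s \<in> N" using that S(2) no_excess by (auto simp: N_def)
      then show ?thesis using e_max S(4) that by (simp add: mult_left_mono)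
    qed simp
    then have "(\<Sum>s\<in>S. \<mu> s * norm s) \<le> (\<Sum>s\<in>S. \<mu> s * norm e)" by (rule sum_mono)
    also have "\<dots> = norm e" using S(5) by (simp flip: sum_distrib_right)
    finally have "(\<Sum>s\<in>S. \<mu> s * norm s) \<le> norm e" .
    moreover have "norm x \<le> (\<Sum>s\<in>S. \<mu> s * norm s)"
      unfolding x using S(4) by (auto intro!: order_trans[OF norm_sum] sum_mono)
    ultimately show "norm x \<le> norm e" by linarith
  qed
  have "e \<in> nodes T" "v e = m" using e(1) by (auto simp: N_def)
  moreover from this have "extreme_minimizer v (mesh_union T) e"
    unfolding extreme_minimizer_def
  proof (intro conjI ballI impI)
    show "e \<in> mesh_union T" using \<open>e \<in> nodes T\<close> nodes_subset_mesh_union by blast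
    show "v e \<le> v x" if "x \<in> mesh_union T" for x
      using minimal[OF that] \<open>v e = m\<close> by simp
    show "a = b" if "a \<in> mesh_union T" "b \<in> mesh_union T" "v a = v e" "v b = v e" "e = midpoint a b"
      for a b
      using midpoint_eq_imp_eq_of_norm_le[OF that(5)] level[OF that(1)] level[OF that(2)] that(3,4)
        \<open>v e = m\<close> by simp
  qed
  ultimately show ?thesis using that by blast
qed

section \<open>Controls\<close>

lemma S1_nonempty: "(S1 :: (real^'n::finite^'n) set) \<noteq> {}"
proof -
  define B :: "real^'n^'n" where "B = (1 / real CARD('n)) *\<^sub>R mat 1"
  have "B *v x = (1 / real CARD('n)) *\<^sub>R x" for x
    by (simp add: B_def flip: scaleR_matrix_vector_assoc)
  moreover have "transpose B = B" by (simp add: B_def transpose_def mat_def vec_eq_iff)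
  ultimately have "psd_matrix B" by (simp add: psd_matrix_def symmetric_matrix_def)
  moreover have "trace B = 1" by (simp add: B_def trace_def mat_def)
  ultimately show ?thesis by (auto simp: S1_def)
qed

lemma
  assumes "admissible_controls F c"
  shows admissible_controls_S1: "S1 = ctrl_map ` F"
    and admissible_controls_compact: "compact F"
    and admissible_controls_nonempty: "F \<noteq> {}"
    and ctrl_of_ctrl_map: "q \<in> F \<Longrightarrow> ctrl_of F (ctrl_map q) = q"
    and admissible_control_weights: "q \<in> F \<Longrightarrow> diagonal_matrix (snd q) \<and> (\<forall>j. 0 \<le> snd q $ j $ j)"
  using assms S1_nonempty unfolding admissible_controls_def bij_betw_def ctrl_of_def
  by (auto simp: the_inv_into_f_f)

lemma ctrl_map_diagonal_entry:
  assumes "diagonal_matrix l"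
  shows "ctrl_map (s, l) $ i $ i' = (\<Sum>j\<in>UNIV. s $ i $ j * l $ j $ j * s $ i' $ j)"
proof -
  have "(\<Sum>k\<in>UNIV. s $ i $ k * l $ k $ j) = s $ i $ j * l $ j $ j" for j
    using assms by (subst sum.remove[of UNIV j]) (auto simp: diagonal_matrix_def intro: sum.neutral)
  then show ?thesis
    by (simp add: ctrl_map_def matrix_matrix_mult_def transpose_def)
qed

lemma trace_ctrl_map_diagonal:
  assumes "diagonal_matrix l"
  shows "trace (ctrl_map (s, l)) = (\<Sum>j\<in>UNIV. l $ j $ j * (norm (column j s))\<^sup>2)"
  unfolding trace_def ctrl_map_diagonal_entry[OF assms]
  by (subst sum.swap) (simp add: power2_norm_eq_inner inner_vec_def column_def sum_distrib_left mult_ac)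

lemma det_ctrl_map_nonneg:
  assumes "diagonal_matrix l" "\<forall>j. 0 \<le> l $ j $ j"
  shows "0 \<le> det (ctrl_map (s, l))"
proof -
  have "det l = (\<Prod>j\<in>UNIV. l $ j $ j)"
    using assms(1) by (intro det_diagonal) (auto simp: diagonal_matrix_def)
  then have "0 \<le> det l" using assms(2) by (simp add: prod_nonneg)
  then show ?thesis
    by (simp add: ctrl_map_def det_mul mult.commute[of "det s"] mult.assoc flip: power2_eq_square)
qed

lemma
  assumes "admissible_controls F c" "q \<in> F"
  shows admissible_control_trace: "(\<Sum>j\<in>UNIV. snd q $ j $ j * (norm (column j (fst q)))\<^sup>2) = 1"
    and admissible_control_det_nonneg: "0 \<le> det (ctrl_map q)"
proof -
  obtain s l where q: "q = (s, l)" by force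
  have "ctrl_map q \<in> S1" using admissible_controls_S1[OF assms(1)] assms(2) by blast
  then show "(\<Sum>j\<in>UNIV. snd q $ j $ j * (norm (column j (fst q)))\<^sup>2) = 1"
    using admissible_control_weights[OF assms] trace_ctrl_map_diagonal[of l s]
    by (simp add: S1_def q)
  show "0 \<le> det (ctrl_map q)"
    using admissible_control_weights[OF assms] det_ctrl_map_nonneg[of l s] by (simp add: q)
qed

lemma admissible_control_active:
  assumes "admissible_controls F c" "q \<in> F"
  obtains j where "snd q $ j $ j \<noteq> 0" "column j (fst q) \<noteq> 0"
proof -
  obtain j where "snd q $ j $ j * (norm (column j (fst q)))\<^sup>2 \<noteq> 0"
    using admissible_control_trace[OF assms] by (metis (no_types, lifting) sum.neutral zero_neq_one)
  then show ?thesis using that by auto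
qed

lemma continuous_on_det:
  fixes A :: "'a::topological_space \<Rightarrow> real^'n::finite^'n"
  assumes "\<And>i j. continuous_on S (\<lambda>x. A x $ i $ j)"
  shows "continuous_on S (\<lambda>x. det (A x))"
  unfolding det_def by (intro continuous_intros assms)

lemma continuous_on_root_det_ctrl_map:
  "continuous_on F (\<lambda>q. root CARD('n) (det (ctrl_map q :: real^'n::finite^'n)))"
proof -
  have "continuous_on F (\<lambda>q. ctrl_map q $ i $ j)" for i j
    unfolding ctrl_map_def case_prod_unfold
    by (simp add: matrix_matrix_mult_def transpose_def) (intro continuous_intros)
  then show ?thesis by (intro continuous_on_real_root continuous_on_det)
qed

section \<open>Second differences\<close>

text \<open>The unscaled second difference \<open>\<Delta>\<^sub>B\<close>: for \<open>s = \<phi> x\<close> the scheme reads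
  \<open>L\<^sub>h\<^sup>B(s, \<phi>)(x) = - second_diff \<phi> x k (\<sigma>, \<lambda>) / k\<^sup>2 + f x det(B)\<^bsup>1/d\<^esup>\<close>.\<close>
definition second_diff ::
    "(real^'n \<Rightarrow> real) \<Rightarrow> real^'n \<Rightarrow> real \<Rightarrow> (real^'n::finite^'n) \<times> (real^'n^'n) \<Rightarrow> real" where
  "second_diff h x t q = (\<Sum>j\<in>UNIV. snd q $ j $ j *
     (h (x - t *\<^sub>R column j (fst q)) - 2 * h x + h (x + t *\<^sub>R column j (fst q))))"

lemma second_diff_lincomb:
  "second_diff (\<lambda>y. a * h y + b * h' y) x t q = a * second_diff h x t q + b * second_diff h' x t q"
  unfolding second_diff_def sum_distrib_left sum.distrib[symmetric]
  by (rule sum.cong) (simp_all add: algebra_simps)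

lemma second_diff_mono:
  assumes "\<And>j. 0 \<le> snd q $ j $ j" "h x = h' x"
    and "\<And>j. h (x - t *\<^sub>R column j (fst q)) \<le> h' (x - t *\<^sub>R column j (fst q))"
    and "\<And>j. h (x + t *\<^sub>R column j (fst q)) \<le> h' (x + t *\<^sub>R column j (fst q))"
  shows "second_diff h x t q \<le> second_diff h' x t q"
  unfolding second_diff_def using assms by (intro sum_mono mult_left_mono) (auto intro: add_mono)

lemma second_diff_quadratic:
  "second_diff (\<lambda>y. M / 2 * (norm (y - p))\<^sup>2) x t q =
     M * t\<^sup>2 * (\<Sum>j\<in>UNIV. snd q $ j $ j * (norm (column j (fst q)))\<^sup>2)"
proof -
  have "M / 2 * (norm (x - v - p))\<^sup>2 - 2 * (M / 2 * (norm (x - p))\<^sup>2) + M / 2 * (norm (x + v - p))\<^sup>2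
      = M * (norm v)\<^sup>2" for v
  proof -
    have "(norm (x - v - p))\<^sup>2 + (norm (x + v - p))\<^sup>2 = 2 * (norm (x - p))\<^sup>2 + 2 * (norm v)\<^sup>2"
      by (simp add: power2_norm_eq_inner inner_add_left inner_add_right inner_diff_left
          inner_diff_right inner_commute)
    moreover have "M / 2 * (norm (x - v - p))\<^sup>2 - 2 * (M / 2 * (norm (x - p))\<^sup>2) + M / 2 * (norm (x + v - p))\<^sup>2
        = M / 2 * ((norm (x - v - p))\<^sup>2 + (norm (x + v - p))\<^sup>2) - M * (norm (x - p))\<^sup>2"
      by (simp add: algebra_simps)
    ultimately show ?thesis by (simp add: algebra_simps)
  qed
  then show ?thesis
    by (simp add: second_diff_def sum_distrib_left power_mult_distrib mult_ac)
qed

lemma continuous_on_second_diff: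
  assumes "continuous_on X h"
    and "\<And>q j. q \<in> F \<Longrightarrow> x - t *\<^sub>R column j (fst q) \<in> X \<and> x + t *\<^sub>R column j (fst q) \<in> X"
  shows "continuous_on F (second_diff h x t)"
proof -
  have column: "continuous_on F (\<lambda>q. column j (fst q))" for j
    unfolding column_def by (intro continuous_intros)
  have "continuous_on F (\<lambda>q. h (x - t *\<^sub>R column j (fst q)))"
    "continuous_on F (\<lambda>q. h (x + t *\<^sub>R column j (fst q)))" for j
    by (rule continuous_on_compose2[OF assms(1)], use assms(2) in \<open>auto intro!: continuous_intros column\<close>)+
  then show ?thesis
    unfolding second_diff_def by (intro continuous_intros)
qed

lemma extreme_minimizer_second_diff_pos:
  assumes min: "extreme_minimizer w X x" and "0 < t"
    and stencil: "\<And>j. x - t *\<^sub>R column j (fst q) \<in> X" "\<And>j. x + t *\<^sub>R column j (fst q) \<in> X"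
    and weights: "\<And>j. 0 \<le> snd q $ j $ j"
    and active: "snd q $ j $ j \<noteq> 0" "column j (fst q) \<noteq> 0"
  shows "0 < second_diff w x t q"
proof -
  define v where "v i = t *\<^sub>R column i (fst q)" for i
  define \<delta> where "\<delta> i = w (x - v i) - 2 * w x + w (x + v i)" for i
  have lower: "w x \<le> w (x - v i)" "w x \<le> w (x + v i)" for i
    using min stencil unfolding extreme_minimizer_def v_def by auto
  have "0 < \<delta> j"
  proof (rule ccontr)
    assume "\<not> 0 < \<delta> j"
    then have "w (x - v j) = w x" "w (x + v j) = w x" using lower[of j] by (auto simp: \<delta>_def)
    moreover have "x = midpoint (x - v j) (x + v j)"
      by (simp add: midpoint_def inverse_eq_divide)
    ultimately have "x - v j = x + v j"
      using min stencil unfolding extreme_minimizer_def v_def by blast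
    then have "2 *\<^sub>R v j = 0" by (simp add: scaleR_2 algebra_simps)
    then show False using \<open>0 < t\<close> active(2) by (simp add: v_def)
  qed
  moreover have "0 \<le> \<delta> i" for i using lower[of i] by (simp add: \<delta>_def)
  ultimately show ?thesis
    unfolding second_diff_def v_def[symmetric] \<delta>_def[symmetric] using weights active(1)
    by (intro sum_pos2[where i = j]) (auto simp: less_le)
qed

section \<open>The scheme at a node\<close>

lemma
  assumes "simplicial_mesh T" "admissible_k F T k" "x \<in> inodes T"
  shows admissible_k_pos: "0 < k x"
    and stencil_in_mesh_union: "q \<in> F \<Longrightarrow>
      x - k x *\<^sub>R column j (fst q) \<in> mesh_union T \<and> x + k x *\<^sub>R column j (fst q) \<in> mesh_union T"
  using assms(2) inode_in_Omega_h[OF assms(1,3)] closure_Omega_h_subset_mesh_union[OF assms(1)]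
  unfolding admissible_k_def by (auto simp: case_prod_unfold)

lemma Hh_interior_node:
  fixes F :: "((real^'n::finite^'n) \<times> (real^'n^'n)) set"
  assumes F: "admissible_controls F c" and T: "simplicial_mesh T" and k: "admissible_k F T k"
    and x: "x \<in> inodes T"
  shows "Hh F f g T k (u x) (ext T u) x =
    (SUP q\<in>F. - (second_diff u x (k x) q / (k x)\<^sup>2) + f x * root CARD('n) (det (ctrl_map q)))"
proof -
  have "Lh F f g T k (ctrl_map q) (u x) (ext T u) x =
      - (second_diff u x (k x) q / (k x)\<^sup>2) + f x * root CARD('n) (det (ctrl_map q))"
    if q: "q \<in> F" for q
  proof -
    obtain s l where q_eq: "q = (s, l)" by force
    have "ext T u (x - k x *\<^sub>R column j s) = u (x - k x *\<^sub>R column j s)"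
      "ext T u (x + k x *\<^sub>R column j s) = u (x + k x *\<^sub>R column j s)" for j
      using stencil_in_mesh_union[OF T k x q] by (simp_all add: ext_eq q_eq)
    then show ?thesis
      using x ctrl_of_ctrl_map[OF F q]
      by (simp add: Lh_def Let_def q_eq second_diff_def sum_divide_distrib)
  qed
  then show ?thesis
    unfolding Hh_def admissible_controls_S1[OF F] image_comp by (simp cong: image_cong)
qed

lemma interior_node_active_control:
  fixes F :: "((real^'n::finite^'n) \<times> (real^'n^'n)) set"
  assumes F: "admissible_controls F c" and T: "simplicial_mesh T" and k: "admissible_k F T k"
    and u: "discrete_solution F f g T k u" and x: "x \<in> inodes T"
  obtains q where "q \<in> F"
    "second_diff u x (k x) q = (k x)\<^sup>2 * (f x * root CARD('n) (det (ctrl_map q)))"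
proof -
  define G where "G q = - (second_diff u x (k x) q / (k x)\<^sup>2) + f x * root CARD('n) (det (ctrl_map q))"
    for q
  have "continuous_on (mesh_union T) u" using u by (simp add: discrete_solution_def Vh_def)
  then have "continuous_on F G"
    unfolding G_def using stencil_in_mesh_union[OF T k x] admissible_k_pos[OF T k x]
    by (intro continuous_intros continuous_on_second_diff continuous_on_root_det_ctrl_map) auto
  then obtain q where q: "q \<in> F" "\<And>q'. q' \<in> F \<Longrightarrow> G q' \<le> G q"
    using continuous_attains_sup[OF admissible_controls_compact[OF F] admissible_controls_nonempty[OF F]]
    by blast
  have "G q = Hh F f g T k (u x) (ext T u) x"
    unfolding Hh_interior_node[OF F T k x] G_def[symmetric] using q
    by (intro cSup_eq_maximum[symmetric]) auto
  also have "\<dots> = 0" using u x by (simp add: discrete_solution_def inodes_def)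
  finally show ?thesis
    using that q(1) admissible_k_pos[OF T k x] by (simp add: G_def field_simps)
qed

lemma discrete_solution_bnode:
  fixes F :: "((real^'n::finite^'n) \<times> (real^'n^'n)) set"
  assumes "discrete_solution F f g T k u" "z \<in> bnodes T"
  shows "u z = g z"
proof -
  have "z \<in> nodes T" "z \<notin> inodes T" using assms(2) by (auto simp: bnodes_def inodes_def)
  then have "Hh F f g T k (u z) (ext T u) z = (SUP B\<in>(S1 :: (real^'n^'n) set). u z - g z)"
    by (simp add: Hh_def Lh_def)
  also have "\<dots> = u z - g z" by (simp add: S1_nonempty)
  finally show ?thesis
    using assms(1) \<open>z \<in> nodes T\<close> by (simp add: discrete_solution_def)
qed

lemma second_diff_Ih_quadratic_ge:
  fixes F :: "((real^'n::finite^'n) \<times> (real^'n^'n)) set"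
  assumes F: "admissible_controls F c" and T: "simplicial_mesh T" and k: "admissible_k F T k"
    and x: "x \<in> inodes T" and q: "q \<in> F" and "0 \<le> M"
  shows "M * (k x)\<^sup>2 \<le> second_diff (Ih T (\<lambda>y. M / 2 * (norm (y - p))\<^sup>2)) x (k x) q"
proof -
  let ?\<zeta> = "\<lambda>y. M / 2 * (norm (y - p))\<^sup>2"
  have "convex_on UNIV ?\<zeta>"
    using \<open>0 \<le> M\<close> by (intro convex_on_cmul convex_on_norm_diff_power2) simp
  have "M * (k x)\<^sup>2 = second_diff ?\<zeta> x (k x) q"
    unfolding second_diff_quadratic admissible_control_trace[OF F q] by simp
  also have "\<dots> \<le> second_diff (Ih T ?\<zeta>) x (k x) q"
    using admissible_control_weights[OF F q] Ih_node[OF T] x stencil_in_mesh_union[OF T k x q]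
      Ih_ge_convex[OF T \<open>convex_on UNIV ?\<zeta>\<close>]
    by (intro second_diff_mono) (auto simp: inodes_def)
  finally show ?thesis .
qed

lemma
  fixes F :: "((real^'n::finite^'n) \<times> (real^'n^'n)) set" and p :: "real^'n"
  assumes F: "admissible_controls F c" and T: "simplicial_mesh T" and k: "admissible_k F T k"
    and u: "discrete_solution F f g T k u" and x: "x \<in> inodes T" and M: "0 \<le> M"
    and f: "0 \<le> f x" "\<And>q. q \<in> F \<Longrightarrow> f x * root CARD('n) (det (ctrl_map q)) \<le> M"
  defines "I \<equiv> Ih T (\<lambda>y. M / 2 * (norm (y - p))\<^sup>2)"
  shows inode_not_extreme_minimizer_diff: "\<not> extreme_minimizer (\<lambda>y. u y - I y) (mesh_union T) x"
    and inode_not_extreme_minimizer_neg_add: "\<not> extreme_minimizer (\<lambda>y. - (u y + I y)) (mesh_union T) x"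
proof -
  obtain q where q: "q \<in> F"
    and active: "second_diff u x (k x) q = (k x)\<^sup>2 * (f x * root CARD('n) (det (ctrl_map q)))"
    using interior_node_active_control[OF F T k u x] .
  have "0 \<le> f x * root CARD('n) (det (ctrl_map q))"
    using f(1) admissible_control_det_nonneg[OF F q] by simp
  then have u_bounds: "0 \<le> second_diff u x (k x) q" "second_diff u x (k x) q \<le> M * (k x)\<^sup>2"
    using active mult_left_mono[OF f(2)[OF q] zero_le_power2[of "k x"]] by (simp_all add: mult.commute)
  have I_bound: "M * (k x)\<^sup>2 \<le> second_diff I x (k x) q"
    unfolding I_def by (rule second_diff_Ih_quadratic_ge[OF F T k x q M])
  have pos: "0 < second_diff w x (k x) q" if "extreme_minimizer w (mesh_union T) x" for w
  proof -
    obtain j where "snd q $ j $ j \<noteq> 0" "column j (fst q) \<noteq> 0"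
      using admissible_control_active[OF F q] .
    then show ?thesis
      using extreme_minimizer_second_diff_pos[OF that admissible_k_pos[OF T k x]]
        stencil_in_mesh_union[OF T k x q] admissible_control_weights[OF F q] by blast
  qed
  show "\<not> extreme_minimizer (\<lambda>y. u y - I y) (mesh_union T) x"
    using pos[of "\<lambda>y. u y - I y"] second_diff_lincomb[of 1 u "-1" I] u_bounds I_bound by auto
  show "\<not> extreme_minimizer (\<lambda>y. - (u y + I y)) (mesh_union T) x"
    using pos[of "\<lambda>y. - (u y + I y)"] second_diff_lincomb[of "-1" u "-1" I] u_bounds I_bound M
    by auto
qed

section \<open>Discrete comparison principle\<close>

lemma Vh_boundary_minimizer:
  assumes T: "simplicial_mesh T" and v: "v \<in> Vh T"
    and "\<And>x. x \<in> inodes T \<Longrightarrow> \<not> extreme_minimizer v (mesh_union T) x"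
  obtains z where "z \<in> bnodes T" "\<forall>y\<in>mesh_union T. v z \<le> v y"
proof -
  obtain e where "e \<in> nodes T" "extreme_minimizer v (mesh_union T) e"
    using Vh_extreme_minimizer_at_node[OF T v] .
  then show ?thesis
    using that assms(3) unfolding extreme_minimizer_def inodes_def by blast
qed

lemma discrete_min_max_principle:
  fixes F :: "((real^'n::finite^'n) \<times> (real^'n^'n)) set" and p :: "real^'n"
  assumes F: "admissible_controls F c" and T: "simplicial_mesh T" and k: "admissible_k F T k"
    and u: "discrete_solution F f g T k u" and M: "0 \<le> M"
    and f: "\<And>x. x \<in> inodes T \<Longrightarrow> 0 \<le> f x \<and> (\<forall>q\<in>F. f x * root CARD('n) (det (ctrl_map q)) \<le> M)"
  defines "I \<equiv> Ih T (\<lambda>y. M / 2 * (norm (y - p))\<^sup>2)"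
  shows "\<exists>z\<in>bnodes T. \<forall>x. ext T (\<lambda>y. u y - I y) z \<le> ext T (\<lambda>y. u y - I y) x"
    and "\<exists>z\<in>bnodes T. \<forall>x. ext T (\<lambda>y. u y + I y) x \<le> ext T (\<lambda>y. u y + I y) z"
proof -
  have uV: "u \<in> Vh T" using u by (simp add: discrete_solution_def)
  have IV: "I \<in> Vh T" unfolding I_def by (rule Ih_in_Vh[OF T])
  have bnode_mesh: "z \<in> mesh_union T" if "z \<in> bnodes T" for z
    using that bnodes_subset_nodes nodes_subset_mesh_union by blast
  have no_inode_min: "\<not> extreme_minimizer (\<lambda>y. u y - I y) (mesh_union T) x"
    "\<not> extreme_minimizer (\<lambda>y. - (u y + I y)) (mesh_union T) x" if "x \<in> inodes T" for x
    using inode_not_extreme_minimizer_diff[OF F T k u that M] f[OF that]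
      inode_not_extreme_minimizer_neg_add[OF F T k u that M]
    unfolding I_def by auto
  obtain z where z: "z \<in> bnodes T" "\<forall>y\<in>mesh_union T. u z - I z \<le> u y - I y"
    using Vh_boundary_minimizer[OF T Vh_diff[OF uV IV] no_inode_min(1)] by blast
  then have "ext T (\<lambda>y. u y - I y) z \<le> ext T (\<lambda>y. u y - I y) x" for x
    using ext_minimizer[OF T bnode_mesh[OF z(1)], of "\<lambda>y. u y - I y" x] by simp
  with z(1) show "\<exists>z\<in>bnodes T. \<forall>x. ext T (\<lambda>y. u y - I y) z \<le> ext T (\<lambda>y. u y - I y) x"
    by blast
  obtain z where z: "z \<in> bnodes T" "\<forall>y\<in>mesh_union T. - (u z + I z) \<le> - (u y + I y)"
    using Vh_boundary_minimizer[OF T Vh_add_uminus[OF uV IV] no_inode_min(2)] by blast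
  then have "ext T (\<lambda>y. u y + I y) x \<le> ext T (\<lambda>y. u y + I y) z" for x
    using ext_minimizer[OF T bnode_mesh[OF z(1)], of "\<lambda>y. - (u y + I y)" x, unfolded ext_uminus]
    by simp
  with z(1) show "\<exists>z\<in>bnodes T. \<forall>x. ext T (\<lambda>y. u y + I y) x \<le> ext T (\<lambda>y. u y + I y) z"
    by blast
qed

lemma discrete_solution_bounded:
  fixes F :: "((real^'n::finite^'n) \<times> (real^'n^'n)) set"
  assumes F: "admissible_controls F c" and T: "simplicial_mesh T" and k: "admissible_k F T k"
    and u: "discrete_solution F f g T k u" and M: "0 \<le> M"
    and f: "\<And>x. x \<in> inodes T \<Longrightarrow> 0 \<le> f x \<and> (\<forall>q\<in>F. f x * root CARD('n) (det (ctrl_map q)) \<le> M)"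
    and g: "\<And>z. z \<in> bnodes T \<Longrightarrow> \<bar>g z\<bar> \<le> G \<and> norm z \<le> R"
  shows "\<bar>ext T u x\<bar> \<le> G + M / 2 * R\<^sup>2"
proof -
  define \<zeta> where "\<zeta> y = M / 2 * (norm (y - 0))\<^sup>2" for y :: "real^'n"
  define I where "I = Ih T \<zeta>"
  obtain z1 where z1: "z1 \<in> bnodes T" "ext T (\<lambda>y. u y - I y) z1 \<le> ext T (\<lambda>y. u y - I y) x"
    using discrete_min_max_principle(1)[OF F T k u M f, of 0] unfolding I_def \<zeta>_def by blast
  obtain z2 where z2: "z2 \<in> bnodes T" "ext T (\<lambda>y. u y + I y) x \<le> ext T (\<lambda>y. u y + I y) z2"
    using discrete_min_max_principle(2)[OF F T k u M f, of 0] unfolding I_def \<zeta>_def by blast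
  have boundary: "\<bar>u z\<bar> \<le> G" "I z \<le> M / 2 * R\<^sup>2" "ext T h z = h z" if "z \<in> bnodes T" for z h
  proof -
    show "\<bar>u z\<bar> \<le> G" using g discrete_solution_bnode[OF u that] that by simp
    have "z \<in> nodes T" using that bnodes_subset_nodes by blast
    then show "ext T h z = h z" using nodes_subset_mesh_union ext_eq by blast
    have "I z = M / 2 * (norm z)\<^sup>2" using Ih_node[OF T \<open>z \<in> nodes T\<close>] by (simp add: I_def \<zeta>_def)
    then show "I z \<le> M / 2 * R\<^sup>2" using g[OF that] M by (simp add: mult_left_mono power_mono)
  qed
  have "0 \<le> ext T I x"
  proof -
    obtain y where y: "y \<in> mesh_union T" "ext T I x = I y" using ext_value_in_mesh_union[OF T] .
    have "convex_on UNIV \<zeta>"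
      unfolding \<zeta>_def using M by (intro convex_on_cmul convex_on_norm_diff_power2) simp
    then have "\<zeta> y \<le> I y" unfolding I_def using Ih_ge_convex[OF T _ y(1)] by blast
    moreover have "0 \<le> \<zeta> y" using M by (simp add: \<zeta>_def)
    ultimately show ?thesis using y(2) by linarith
  qed
  moreover have "u z1 - I z1 \<le> ext T u x - ext T I x" "ext T u x + ext T I x \<le> u z2 + I z2"
    using z1 z2 boundary by (simp_all add: ext_diff ext_add)
  ultimately show ?thesis
    using boundary(1,2)[OF z1(1)] boundary(1,2)[OF z2(1)] by (simp add: abs_le_iff)
qed

lemma source_bound:
  fixes \<Omega> :: "(real^'n::finite) set" and F :: "((real^'n^'n) \<times> (real^'n^'n)) set"
  assumes F: "admissible_controls F c" and "\<Omega> \<noteq> {}"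
    and f: "bounded (f ` \<Omega>)" "\<forall>x\<in>\<Omega>. 0 \<le> f x"
    and M: "(SUP x\<in>\<Omega>. f x) * (SUP B\<in>S1. root CARD('n) (det (B::real^'n^'n))) \<le> M"
  shows "0 \<le> M"
    and "x \<in> \<Omega> \<Longrightarrow> 0 \<le> f x \<and> (\<forall>q\<in>F. f x * root CARD('n) (det (ctrl_map q)) \<le> M)"
proof -
  have "(\<lambda>B. root CARD('n) (det B)) ` (S1 :: (real^'n^'n) set) = (\<lambda>q. root CARD('n) (det (ctrl_map q))) ` F"
    unfolding admissible_controls_S1[OF F] image_comp by (simp add: o_def)
  moreover have "compact ((\<lambda>q. root CARD('n) (det (ctrl_map q :: real^'n^'n))) ` F)"
    by (rule compact_continuous_image[OF continuous_on_root_det_ctrl_map admissible_controls_compact[OF F]])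
  ultimately have "bdd_above ((\<lambda>B. root CARD('n) (det B)) ` (S1 :: (real^'n^'n) set))"
    by (simp add: bounded_imp_bdd_above compact_imp_bounded)
  then have root_le: "root CARD('n) (det (ctrl_map q)) \<le> (SUP B\<in>S1. root CARD('n) (det (B::real^'n^'n)))"
    if "q \<in> F" for q
    using admissible_controls_S1[OF F] that by (intro cSUP_upper) auto
  have f_le: "f x \<le> (SUP x\<in>\<Omega>. f x)" if "x \<in> \<Omega>" for x
    by (rule cSUP_upper[OF that bounded_imp_bdd_above[OF f(1)]])
  have source: "0 \<le> f x * root CARD('n) (det (ctrl_map q))"
    "f x * root CARD('n) (det (ctrl_map q)) \<le> M" if x: "x \<in> \<Omega>" and q: "q \<in> F" for x q
  proof -
    have "0 \<le> f x" "0 \<le> root CARD('n) (det (ctrl_map q))"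
      using f(2) x admissible_control_det_nonneg[OF F q] by auto
    then show "0 \<le> f x * root CARD('n) (det (ctrl_map q))" by simp
    have "f x * root CARD('n) (det (ctrl_map q))
        \<le> (SUP x\<in>\<Omega>. f x) * (SUP B\<in>S1. root CARD('n) (det (B::real^'n^'n)))"
      using f_le[OF x] root_le[OF q] \<open>0 \<le> f x\<close> \<open>0 \<le> root CARD('n) (det (ctrl_map q))\<close>
      by (intro mult_mono) auto
    then show "f x * root CARD('n) (det (ctrl_map q)) \<le> M" using M by linarith
  qed
  obtain x0 q0 where "x0 \<in> \<Omega>" "q0 \<in> F" using \<open>\<Omega> \<noteq> {}\<close> admissible_controls_nonempty[OF F] by blast
  then show "0 \<le> M" using source by (meson order_trans)
  show "x \<in> \<Omega> \<Longrightarrow> 0 \<le> f x \<and> (\<forall>q\<in>F. f x * root CARD('n) (det (ctrl_map q)) \<le> M)"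
    using source f(2) by blast
qed

theorem lemma6p2:
  fixes \<Omega> :: "(real^'n) set" and f g :: "real^'n \<Rightarrow> real"
    and F :: "((real^'n^'n) \<times> (real^'n^'n)) set" and c \<kappa> :: real
  assumes "CARD('n) \<ge> 2"
    and "open \<Omega>" "bounded \<Omega>" "\<Omega> \<noteq> {}" "strictly_convex_domain \<Omega>"
    and "continuous_on \<Omega> f" "bounded (f ` \<Omega>)" "\<forall>x\<in>\<Omega>. 0 \<le> f x"
    and "continuous_on (frontier \<Omega>) g" "bounded (g ` frontier \<Omega>)"
    and "admissible_controls F c"
  shows "(\<exists>C>0. \<forall>T k u. admissible_mesh \<Omega> \<kappa> T \<and> admissible_k F T k \<and>
              discrete_solution F f g T k u \<longrightarrow>
              (\<forall>x\<in>closure \<Omega>. \<bar>ext T u x\<bar> \<le> C))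
       \<and> (\<forall>T k u (p::real^'n) M. admissible_mesh \<Omega> \<kappa> T \<and> admissible_k F T k \<and>
              discrete_solution F f g T k u \<and>
              M \<ge> (SUP x\<in>\<Omega>. f x) * (SUP B\<in>S1. root CARD('n) (det (B::real^'n^'n))) \<longrightarrow>
              (let \<zeta> = (\<lambda>x. M / 2 * (norm (x - p))\<^sup>2) in
                 (\<exists>z\<in>bnodes T. \<forall>x\<in>closure \<Omega>.
                     ext T (\<lambda>y. u y - Ih T \<zeta> y) z \<le> ext T (\<lambda>y. u y - Ih T \<zeta> y) x) \<and>
                 (\<exists>z\<in>bnodes T. \<forall>x\<in>closure \<Omega>.
                     ext T (\<lambda>y. u y + Ih T \<zeta> y) x \<le> ext T (\<lambda>y. u y + Ih T \<zeta> y) z)))"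
proof -
  let ?M = "(SUP x\<in>\<Omega>. f x) * (SUP B\<in>S1. root CARD('n) (det (B::real^'n^'n)))"
  note F = assms(11) and source = source_bound[OF assms(11,4,7,8)]
  have f: "0 \<le> f x \<and> (\<forall>q\<in>F. f x * root CARD('n) (det (ctrl_map q)) \<le> M)"
    if "admissible_mesh \<Omega> \<kappa> T" "?M \<le> M" "x \<in> inodes T" for T M x
    using source(2)[OF that(2)] inode_in_Omega_h that unfolding admissible_mesh_def by blast
  have "bounded (frontier \<Omega>)"
    using bounded_closure[OF assms(3)] by (rule bounded_subset) (auto simp: frontier_def)
  then obtain R G where RG: "\<And>z. z \<in> frontier \<Omega> \<Longrightarrow> \<bar>g z\<bar> \<le> G \<and> norm z \<le> R"
    using assms(10) unfolding bounded_iff by (metis image_eqI real_norm_def)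
  have "0 < \<bar>G\<bar> + ?M / 2 * R\<^sup>2 + 1" using source(1)[OF order_refl] by (simp add: add_nonneg_pos)
  then show ?thesis
    unfolding Let_def
  proof (intro conjI exI[of _ "\<bar>G\<bar> + ?M / 2 * R\<^sup>2 + 1"] allI impI ballI, goal_cases)
    case (2 T k u x)
    then have T: "admissible_mesh \<Omega> \<kappa> T" "admissible_k F T k" "discrete_solution F f g T k u"
      by auto
    have "\<bar>ext T u x\<bar> \<le> G + ?M / 2 * R\<^sup>2"
      using T(1) RG
      by (intro discrete_solution_bounded[OF F _ T(2,3) source(1)[OF order_refl] f[OF T(1) order_refl]])
        (auto simp: admissible_mesh_def)
    then show ?case by linarith
  next
    case (3 T k u p M)
    then have T: "admissible_mesh \<Omega> \<kappa> T" "admissible_k F T k" "discrete_solution F f g T k u"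
      and M: "?M \<le> M" by auto
    show ?case
      using discrete_min_max_principle(1)[OF F _ T(2,3) source(1)[OF M] f[OF T(1) M], where p = p] T(1)
      unfolding admissible_mesh_def by blast
  next
    case (4 T k u p M)
    then have T: "admissible_mesh \<Omega> \<kappa> T" "admissible_k F T k" "discrete_solution F f g T k u"
      and M: "?M \<le> M" by auto
    show ?case
      using discrete_min_max_principle(2)[OF F _ T(2,3) source(1)[OF M] f[OF T(1) M], where p = p] T(1)
      unfolding admissible_mesh_def by blast
  qed
qed

end
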